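(* Let $X=\{1,\dots,n\}$, $Y$ finite, $Q$ a symmetric irreducible stochastic matrix on $Y$ (notation in context). Let $0\le h\le n$ and let $\underline b$ be a type with $b_0+\cdots+b_m=h$. Then the subspaces $P_{h,\underline b,k}$ of $L(\Theta_h)$, for the integers $k$ with $\ell(\underline b)\le k\le\min\{h,\frac{n+\ell(\underline b)}{2}\}$, are mutually orthogonal with respect to the inner product $\langle F,G\rangle=\sum_{\theta\in\Theta_h}F(\theta)\overline{G(\theta)}$.
   Context: $Q$ acts on $L(Y)$ by $(Qf)(y)=\sum_{y'}q(y,y')f(y')$, with distinct eigenvalues $\lambda_0=1,\dots,\lambda_m$ and eigenspaces $W_0$ (constants), $W_1,\dots,W_m$. For $0\le k\le n$, $\Theta_k$ is the set of functions $\theta$ with $\mathrm{dom}(\theta)$ a $k$-subset of $X$ and values in $Y$ ($\Theta_0$ = empty function); $\varphi\subseteq\theta$ means $\mathrm{dom}\varphi\subseteq\mathrm{dom}\theta$ and $\theta|_{\mathrm{dom}\varphi}=\varphi$. For $1\le k\le n$: $(D_kF)(\varphi)=\sum_{\theta\in\Theta_k:\theta\supseteq\varphi}F(\theta)$ and $(D_k^*F)(\theta)=\sum_{\varphi\in\Theta_{k-1}:\varphi\subseteq\theta}F(\varphi)$; $D_0:=0$. Types $\underline c=(c_0,\dots,c_m)$, $|\underline c|=\sum c_i$, $\ell(\underline c)=c_1+\cdots+c_m$, $\underline c'=(c_0-1,c_1,\dots,c_m)$. A fundamental function of type $\underline c$ on $A$, $|A|=|\underline c|$, is $F=\bigotimes_{j\in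 A}F^j$ ($F(\theta)=\prod_{j\in A}F^j(\theta(j))$ on $Y^A$, $0$ elsewhere) with each $F^j$ in some $W_{i_j}$ and exactly $c_i$ indices with $i_j=i$; $P_{k,\underline c,A}$ is their span, $P_{k,\underline c}=\bigoplus_{|A|=k}P_{k,\underline c,A}$ ($\{0\}$ if an entry is negative). $D_{k,\underline c}=D_k|_{P_{k,\underline c}}$, $D^*_{k,\underline c}=D^*_k|_{P_{k-1,\underline c'}}$. For $|\underline c|=k$: $P_{k,\underline c,k}=\ker D_{k,\underline c}$; for $k<h\le n$, $|\underline c|=h$, $\ell(\underline c)\le k$: $P_{h,\underline c,k}=D^*_{h,\underline c}(P_{h-1,\underline c',k})$. *)

theory Defs
  imports Complex_Main
begin

(* X = {1..n}; Y = the finite type 'y; L(Y) = 'y \<Rightarrow> complex.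
   Partial functions theta are maps nat \<rightharpoonup> 'y with dom theta \<subseteq> {1..n}. *)

definition Qpow :: "('y::finite \<Rightarrow> 'y \<Rightarrow> real) \<Rightarrow> nat \<Rightarrow> 'y \<Rightarrow> 'y \<Rightarrow> real" where
  "Qpow Q r = (compow r (\<lambda>M x y. \<Sum>z\<in>UNIV. M x z * Q z y)) (\<lambda>x y. if x = y then 1 else 0)"

definition symmetric_stochastic_irreducible :: "('y::finite \<Rightarrow> 'y \<Rightarrow> real) \<Rightarrow> bool" where
  "symmetric_stochastic_irreducible Q \<longleftrightarrow>
     (\<forall>x y. Q x y \<ge> 0) \<and> (\<forall>x. (\<Sum>y\<in>UNIV. Q x y) = 1) \<and> (\<forall>x y. Q x y = Q y x) \<and>
     (\<forall>x y. \<exists>r. Qpow Q r x y > 0)"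

definition Qop :: "('y::finite \<Rightarrow> 'y \<Rightarrow> real) \<Rightarrow> ('y \<Rightarrow> complex) \<Rightarrow> 'y \<Rightarrow> complex" where
  "Qop Q f = (\<lambda>y. \<Sum>y'\<in>UNIV. complex_of_real (Q y y') * f y')"

definition eigen_enum :: "('y::finite \<Rightarrow> 'y \<Rightarrow> real) \<Rightarrow> nat \<Rightarrow> (nat \<Rightarrow> complex) \<Rightarrow> bool" where
  "eigen_enum Q m lam \<longleftrightarrow> lam 0 = 1 \<and> inj_on lam {0..m} \<and>
     {\<mu>. \<exists>f. f \<noteq> (\<lambda>_. 0) \<and> Qop Q f = (\<lambda>y. \<mu> * f y)} = lam ` {0..m}"

definition W :: "('y::finite \<Rightarrow> 'y \<Rightarrow> real) \<Rightarrow> (nat \<Rightarrow> complex) \<Rightarrow> nat \<Rightarrow> ('y \<Rightarrow> complex) set" where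
  "W Q lam i = {f. Qop Q f = (\<lambda>y. lam i * f y)}"

definition Theta :: "nat \<Rightarrow> nat \<Rightarrow> (nat \<rightharpoonup> 'y) set" where
  "Theta n k = {\<theta>. dom \<theta> \<subseteq> {1..n} \<and> card (dom \<theta>) = k}"

definition cspan :: "('a \<Rightarrow> complex) set \<Rightarrow> ('a \<Rightarrow> complex) set" where
  "cspan B = {f. \<exists>S c. finite S \<and> S \<subseteq> B \<and> f = (\<lambda>x. \<Sum>g\<in>S. c g * g x)}"

definition D :: "nat \<Rightarrow> nat \<Rightarrow> ((nat \<rightharpoonup> 'y) \<Rightarrow> complex) \<Rightarrow> (nat \<rightharpoonup> 'y) \<Rightarrow> complex" where
  "D n k F = (\<lambda>\<phi>. if k = 0 then 0 else
      if \<phi> \<in> Theta n (k - 1) then (\<Sum>\<theta>\<in>{\<theta>\<in>Theta n k. \<phi> \<subseteq>\<^sub>m \<theta>}. F \<theta>) else 0)"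

definition Dstar :: "nat \<Rightarrow> nat \<Rightarrow> ((nat \<rightharpoonup> 'y) \<Rightarrow> complex) \<Rightarrow> (nat \<rightharpoonup> 'y) \<Rightarrow> complex" where
  "Dstar n k F = (\<lambda>\<theta>. if \<theta> \<in> Theta n k then (\<Sum>\<phi>\<in>{\<phi>\<in>Theta n (k - 1). \<phi> \<subseteq>\<^sub>m \<theta>}. F \<phi>) else 0)"

text \<open>types c = (c 0, ..., c m), entries as integers (negative allowed for c')\<close>
definition tsize :: "nat \<Rightarrow> (nat \<Rightarrow> int) \<Rightarrow> int" where
  "tsize m c = (\<Sum>i\<in>{0..m}. c i)"

definition tlen :: "nat \<Rightarrow> (nat \<Rightarrow> int) \<Rightarrow> int" where
  "tlen m c = (\<Sum>i\<in>{1..m}. c i)"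

definition tprime :: "(nat \<Rightarrow> int) \<Rightarrow> nat \<Rightarrow> int" where
  "tprime c = c(0 := c 0 - 1)"

definition tensor :: "nat set \<Rightarrow> (nat \<Rightarrow> 'y \<Rightarrow> complex) \<Rightarrow> (nat \<rightharpoonup> 'y) \<Rightarrow> complex" where
  "tensor A Fs = (\<lambda>\<theta>. if dom \<theta> = A then (\<Prod>j\<in>A. Fs j (the (\<theta> j))) else 0)"

definition fundamental ::
  "('y::finite \<Rightarrow> 'y \<Rightarrow> real) \<Rightarrow> nat \<Rightarrow> (nat \<Rightarrow> complex) \<Rightarrow> (nat \<Rightarrow> int) \<Rightarrow> nat set
     \<Rightarrow> ((nat \<rightharpoonup> 'y) \<Rightarrow> complex) \<Rightarrow> bool" where
  "fundamental Q m lam c A F \<longleftrightarrow> int (card A) = tsize m c \<and>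
     (\<exists>Fs idx. (\<forall>j\<in>A. idx j \<le> m \<and> Fs j \<in> W Q lam (idx j)) \<and>
               (\<forall>i\<le>m. int (card {j\<in>A. idx j = i}) = c i) \<and>
               F = tensor A Fs)"

text \<open>P_{k,c} = direct sum over k-subsets A of X of P_{k,c,A}\<close>
definition P :: "nat \<Rightarrow> ('y::finite \<Rightarrow> 'y \<Rightarrow> real) \<Rightarrow> nat \<Rightarrow> (nat \<Rightarrow> complex) \<Rightarrow> nat \<Rightarrow> (nat \<Rightarrow> int)
     \<Rightarrow> ((nat \<rightharpoonup> 'y) \<Rightarrow> complex) set" where
  "P n Q m lam k c = cspan {F. \<exists>A. A \<subseteq> {1..n} \<and> card A = k \<and> fundamental Q m lam c A F}"

text \<open>Prec d c = P_{k+d, c, k}\<close>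
fun Prec :: "nat \<Rightarrow> ('y::finite \<Rightarrow> 'y \<Rightarrow> real) \<Rightarrow> nat \<Rightarrow> (nat \<Rightarrow> complex) \<Rightarrow> nat \<Rightarrow> nat \<Rightarrow> (nat \<Rightarrow> int)
     \<Rightarrow> ((nat \<rightharpoonup> 'y) \<Rightarrow> complex) set" where
  "Prec n Q m lam k 0 c = {F \<in> P n Q m lam k c. D n k F = (\<lambda>_. 0)}"
| "Prec n Q m lam k (Suc d) c = Dstar n (k + Suc d) ` Prec n Q m lam k d (tprime c)"

definition Phck :: "nat \<Rightarrow> ('y::finite \<Rightarrow> 'y \<Rightarrow> real) \<Rightarrow> nat \<Rightarrow> (nat \<Rightarrow> complex) \<Rightarrow> nat \<Rightarrow> (nat \<Rightarrow> int) \<Rightarrow> nat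
     \<Rightarrow> ((nat \<rightharpoonup> 'y) \<Rightarrow> complex) set" where
  "Phck n Q m lam h c k = Prec n Q m lam k (h - k) c"

definition inner_Theta :: "nat \<Rightarrow> nat \<Rightarrow> ((nat \<rightharpoonup> 'y) \<Rightarrow> complex) \<Rightarrow> ((nat \<rightharpoonup> 'y) \<Rightarrow> complex) \<Rightarrow> complex" where
  "inner_Theta n h F G = (\<Sum>\<theta>\<in>Theta n h. F \<theta> * cnj (G \<theta>))"

end

theory Submission
  imports Defs
begin

text \<open>
  With respect to the inner product on L(Theta_h), the adjoint of D_h is D*_h. On P_{t,c} these
  operators satisfy D_{t+1} D*_{t+1} = D*_t D_t + |Y| (n - t - c_0): deleting a coordinate j of a
  fundamental function multiplies it by the sum of its factor F^j over Y, which is |Y| times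
  F^j if F^j is constant and 0 if F^j lies in W_i with i > 0, because eigenfunctions of the
  symmetric stochastic matrix Q for eigenvalues other than 1 have mean zero and, by
  irreducibility, those for 1 are constant. Hence, if D G = 0, then D maps (D*)^(j+1) G to a
  multiple of (D*)^j G. For k1 < k2 write F = (D*)^(h-k1) F_0 and G = (D*)^(h-k2) G_0 with
  D G_0 = 0: moving the factors D* of F one at a time to the other side of the inner product
  ends with <D* X, G_0> = <X, D G_0> = 0.
\<close>

section \<open>Linearity of D and D*\<close>

lemma D_sum: "D n k (\<lambda>x. \<Sum>g\<in>S. f g x) = (\<lambda>x. \<Sum>g\<in>S. D n k (f g) x)"
  unfolding D_def by (rule ext) (simp, subst sum.swap, simp)

lemma Dstar_sum: "Dstar n k (\<lambda>x. \<Sum>g\<in>S. f g x) = (\<lambda>x. \<Sum>g\<in>S. Dstar n k (f g) x)"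
  unfolding Dstar_def by (rule ext) (simp, subst sum.swap, simp)

lemma D_scale: "D n k (\<lambda>x. a * f x) = (\<lambda>x. a * D n k f x)"
  unfolding D_def by (rule ext) (auto simp: sum_distrib_left)

lemma Dstar_scale: "Dstar n k (\<lambda>x. a * f x) = (\<lambda>x. a * Dstar n k f x)"
  unfolding Dstar_def by (rule ext) (auto simp: sum_distrib_left)

lemma D_lincomb: "D n k (\<lambda>x. \<Sum>g\<in>S. a g * f g x) = (\<lambda>x. \<Sum>g\<in>S. a g * D n k (f g) x)"
  by (simp add: D_sum D_scale)

lemma Dstar_lincomb: "Dstar n k (\<lambda>x. \<Sum>g\<in>S. a g * f g x) = (\<lambda>x. \<Sum>g\<in>S. a g * Dstar n k (f g) x)"
  by (simp add: Dstar_sum Dstar_scale)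

lemma Dstar_zero: "Dstar n k (\<lambda>_. 0) = (\<lambda>_. 0)"
  unfolding Dstar_def by auto

section \<open>Eigenfunctions of Q\<close>

lemma Qpow_0: "Qpow Q 0 x y = (if x = y then 1 else 0)"
  unfolding Qpow_def by simp

lemma Qpow_Suc: "Qpow Q (Suc r) x y = (\<Sum>z\<in>UNIV. Qpow Q r x z * Q z y)"
  unfolding Qpow_def by simp

lemma harmonic_function_constant:
  fixes Q :: "'y::finite \<Rightarrow> 'y \<Rightarrow> real" and g :: "'y \<Rightarrow> real"
  assumes ssi: "symmetric_stochastic_irreducible Q"
    and harmonic: "\<And>x. (\<Sum>y\<in>UNIV. Q x y * g y) = g x"
  shows "g x = g y"
proof -
  have nonneg: "\<And>x y. Q x y \<ge> 0" and rows: "\<And>x. (\<Sum>y\<in>UNIV. Q x y) = 1"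
    and sym: "\<And>x y. Q x y = Q y x" and irr: "\<And>x y. \<exists>r. Qpow Q r x y > 0"
    using ssi unfolding symmetric_stochastic_irreducible_def by auto
  have energy: "(\<Sum>x\<in>UNIV. \<Sum>y\<in>UNIV. Q x y * (g x - g y)\<^sup>2) = 0"
  proof -
    have "(\<Sum>x\<in>UNIV. \<Sum>y\<in>UNIV. Q x y * (g x - g y)\<^sup>2)
        = (\<Sum>x\<in>UNIV. \<Sum>y\<in>UNIV. Q x y * (g x)\<^sup>2) + (\<Sum>x\<in>UNIV. \<Sum>y\<in>UNIV. Q x y * (g y)\<^sup>2)
          - 2 * (\<Sum>x\<in>UNIV. g x * (\<Sum>y\<in>UNIV. Q x y * g y))"
      by (simp add: power2_diff algebra_simps sum.distrib sum_subtractf sum_distrib_left sum_distrib_right)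
    also have "(\<Sum>x\<in>UNIV. \<Sum>y\<in>UNIV. Q x y * (g x)\<^sup>2) = (\<Sum>x\<in>UNIV. (g x)\<^sup>2)"
      by (simp add: sum_distrib_right[symmetric] rows)
    also have "(\<Sum>x\<in>UNIV. \<Sum>y\<in>UNIV. Q x y * (g y)\<^sup>2) = (\<Sum>y\<in>UNIV. \<Sum>x\<in>UNIV. Q y x * (g y)\<^sup>2)"
      by (subst sum.swap) (simp add: sym)
    also have "\<dots> = (\<Sum>x\<in>UNIV. (g x)\<^sup>2)"
      by (simp add: sum_distrib_right[symmetric] rows)
    also have "(\<Sum>x\<in>UNIV. g x * (\<Sum>y\<in>UNIV. Q x y * g y)) = (\<Sum>x\<in>UNIV. (g x)\<^sup>2)"
      by (simp add: harmonic power2_eq_square)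
    finally show ?thesis by simp
  qed
  have "Q x y * (g x - g y)\<^sup>2 = 0" for x y
    using energy by (simp add: sum_nonneg_eq_0_iff sum_nonneg nonneg)
  then have step: "Q x y > 0 \<Longrightarrow> g x = g y" for x y
    by (metis less_irrefl mult_eq_0_iff power_eq_0_iff right_minus_eq)
  have "Qpow Q r x y > 0 \<Longrightarrow> g x = g y" for r y
  proof (induction r arbitrary: y)
    case 0
    then show ?case by (simp add: Qpow_0 split: if_splits)
  next
    case (Suc r)
    then have "(\<Sum>z\<in>UNIV. Qpow Q r x z * Q z y) > 0" by (simp add: Qpow_Suc)
    then obtain z where "Qpow Q r x z * Q z y > 0"
      using sum_nonpos[of UNIV "\<lambda>z. Qpow Q r x z * Q z y"] by (meson not_le)
    with nonneg[of z y] have "Q z y > 0" "Qpow Q r x z > 0"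
      by (auto simp: zero_less_mult_iff)
    then show ?case using Suc.IH step by metis
  qed
  then show ?thesis using irr by blast
qed

lemma eigenvalue_1_constant:
  fixes Q :: "'y::finite \<Rightarrow> 'y \<Rightarrow> real"
  assumes ssi: "symmetric_stochastic_irreducible Q"
    and eigen: "Qop Q f = (\<lambda>y. 1 * f y)"
  shows "f x = f y"
proof -
  have h: "(\<Sum>y'\<in>UNIV. complex_of_real (Q y y') * f y') = f y" for y
    using fun_cong[OF eigen, of y] by (simp add: Qop_def)
  have re: "(\<Sum>y'\<in>UNIV. Q y y' * Re (f y')) = Re (f y)" for y
    using arg_cong[where f=Re, OF h[of y]] by simp
  have im: "(\<Sum>y'\<in>UNIV. Q y y' * Im (f y')) = Im (f y)" for y
    using arg_cong[where f=Im, OF h[of y]] by simp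
  show ?thesis
    using harmonic_function_constant[OF ssi re] harmonic_function_constant[OF ssi im]
    by (simp add: complex_eq_iff)
qed

lemma eigenfunction_sum_eq_0:
  fixes Q :: "'y::finite \<Rightarrow> 'y \<Rightarrow> real"
  assumes ssi: "symmetric_stochastic_irreducible Q"
    and eigen: "Qop Q f = (\<lambda>y. \<mu> * f y)" and "\<mu> \<noteq> 1"
  shows "(\<Sum>y\<in>UNIV. f y) = 0"
proof -
  have rows: "\<And>x. (\<Sum>y\<in>UNIV. Q x y) = 1" and sym: "\<And>x y. Q x y = Q y x"
    using ssi unfolding symmetric_stochastic_irreducible_def by auto
  have "\<mu> * (\<Sum>y\<in>UNIV. f y) = (\<Sum>y\<in>UNIV. \<Sum>y'\<in>UNIV. complex_of_real (Q y y') * f y')"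
    using eigen by (simp add: Qop_def sum_distrib_left fun_eq_iff)
  also have "\<dots> = (\<Sum>y'\<in>UNIV. (\<Sum>y\<in>UNIV. complex_of_real (Q y' y)) * f y')"
    by (subst sum.swap) (simp add: sum_distrib_right sym)
  also have "\<dots> = (\<Sum>y\<in>UNIV. f y)"
    by (simp add: of_real_sum[symmetric] rows del: of_real_sum)
  finally have "(\<mu> - 1) * (\<Sum>y\<in>UNIV. f y) = 0" by (simp add: algebra_simps)
  with \<open>\<mu> \<noteq> 1\<close> show ?thesis by simp
qed

section \<open>D and D* on tensor products\<close>

lemma finite_Theta: "finite (Theta n k :: (nat \<rightharpoonup> 'y::finite) set)"
proof -
  have "Theta n k \<subseteq> (\<Union>A\<in>Pow {1..n}. {\<theta>::nat \<rightharpoonup> 'y. dom \<theta> = A \<and> ran \<theta> \<subseteq> UNIV})"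
    unfolding Theta_def by auto
  moreover have "finite (\<Union>A\<in>Pow {1..n}. {\<theta>::nat \<rightharpoonup> 'y. dom \<theta> = A \<and> ran \<theta> \<subseteq> UNIV})"
    by (intro finite_UN_I finite_set_of_finite_maps) (auto intro: finite_subset)
  ultimately show ?thesis by (rule finite_subset)
qed

lemma map_le_eq_restrict: "\<phi> \<subseteq>\<^sub>m \<theta> \<Longrightarrow> \<phi> = \<theta> |` dom \<phi>"
  unfolding map_le_def restrict_map_def by (rule ext) (auto simp: domIff)

lemma tensor_cong: "(\<And>j. j \<in> A \<Longrightarrow> Fs j = Gs j) \<Longrightarrow> tensor A Fs = tensor A Gs"
  unfolding tensor_def by (auto intro!: ext prod.cong)

lemma sum_submaps_tensor:
  fixes \<theta> :: "nat \<rightharpoonup> 'y::finite"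
  shows "(\<Sum>\<phi>\<in>{\<phi>\<in>Theta n k. \<phi> \<subseteq>\<^sub>m \<theta>}. tensor A Fs \<phi>)
     = (if A \<subseteq> dom \<theta> \<and> A \<subseteq> {1..n} \<and> card A = k then \<Prod>l\<in>A. Fs l (the (\<theta> l)) else 0)"
proof -
  have "(\<Sum>\<phi>\<in>{\<phi>\<in>Theta n k. \<phi> \<subseteq>\<^sub>m \<theta>}. tensor A Fs \<phi>)
      = (\<Sum>\<phi>\<in>{\<phi>\<in>Theta n k. \<phi> \<subseteq>\<^sub>m \<theta>}. if \<phi> = \<theta> |` A then tensor A Fs (\<theta> |` A) else 0)"
  proof (rule sum.cong[OF refl])
    fix \<phi> assume "\<phi> \<in> {\<phi>\<in>Theta n k. \<phi> \<subseteq>\<^sub>m \<theta>}"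
    then have restr: "dom \<phi> = A \<Longrightarrow> \<phi> = \<theta> |` A" using map_le_eq_restrict by auto
    show "tensor A Fs \<phi> = (if \<phi> = \<theta> |` A then tensor A Fs (\<theta> |` A) else 0)"
    proof (cases "\<phi> = \<theta> |` A")
      case False
      then have "dom \<phi> \<noteq> A" using restr by blast
      then show ?thesis using False by (simp add: tensor_def)
    qed simp
  qed
  also have "\<dots> = (if \<theta> |` A \<in> Theta n k then tensor A Fs (\<theta> |` A) else 0)"
  proof -
    have "\<theta> |` A \<subseteq>\<^sub>m \<theta>" unfolding map_le_def by simp
    then show ?thesis by (simp add: sum.delta' finite_Theta)
  qed
  also have "\<dots> = (if A \<subseteq> dom \<theta> \<and> A \<subseteq> {1..n} \<and> card A = k then \<Prod>l\<in>A. Fs l (the (\<theta> l)) else 0)"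
  proof (cases "A \<subseteq> dom \<theta>")
    case True
    then have "dom (\<theta> |` A) = A" by (simp add: Int_absorb1)
    then show ?thesis using True by (simp add: Theta_def tensor_def cong: prod.cong)
  next
    case False
    then have "dom (\<theta> |` A) \<noteq> A" by (simp add: Int_absorb1) blast
    then show ?thesis using False by (simp add: tensor_def)
  qed
  finally show ?thesis .
qed

lemma tensor_insert_const_one:
  assumes "finite A" "j \<notin> A"
  shows "tensor (insert j A) (Fs(j := (\<lambda>_. 1))) \<theta>
       = (if dom \<theta> = insert j A then \<Prod>l\<in>A. Fs l (the (\<theta> l)) else 0)"
  using assms unfolding tensor_def by (auto intro!: prod.cong)

lemma sum_tensor_insert_const_one:
  assumes "A \<subseteq> {1..n}"
  shows "(\<Sum>j\<in>{1..n}-A. tensor (insert j A) (Fs(j := (\<lambda>_. 1))) \<theta>)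
       = (if A \<subseteq> dom \<theta> \<and> dom \<theta> \<subseteq> {1..n} \<and> card (dom \<theta>) = Suc (card A)
          then \<Prod>l\<in>A. Fs l (the (\<theta> l)) else 0)"
proof (cases "A \<subseteq> dom \<theta> \<and> dom \<theta> \<subseteq> {1..n} \<and> card (dom \<theta>) = Suc (card A)")
  case True
  have "finite A" using assms finite_subset by blast
  with True have "card (dom \<theta> - A) = 1"
    by (simp add: card_Diff_subset)
  then obtain j0 where j0: "dom \<theta> - A = {j0}" by (rule card_1_singletonE)
  then have j0A: "j0 \<in> {1..n} - A" and eq: "\<And>j. j \<notin> A \<Longrightarrow> dom \<theta> = insert j A \<longleftrightarrow> j = j0"
    using True by blast+
  have "(\<Sum>j\<in>{1..n}-A. tensor (insert j A) (Fs(j := (\<lambda>_. 1))) \<theta>)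
      = (\<Sum>j\<in>{1..n}-A. if j = j0 then \<Prod>l\<in>A. Fs l (the (\<theta> l)) else 0)"
    using \<open>finite A\<close> eq by (intro sum.cong) (auto simp: tensor_insert_const_one)
  also have "\<dots> = (\<Prod>l\<in>A. Fs l (the (\<theta> l)))"
    using j0A by (simp add: sum.delta')
  finally show ?thesis
    unfolding if_P[OF True] .
next
  case False
  have "finite A" using assms finite_subset by blast
  moreover have "dom \<theta> \<noteq> insert j A" if "j \<in> {1..n} - A" for j
  proof
    assume "dom \<theta> = insert j A"
    moreover have "card (insert j A) = Suc (card A)" using that \<open>finite A\<close> by simp
    ultimately show False using False that assms by auto
  qed
  ultimately show ?thesis
    unfolding if_not_P[OF False] by (intro sum.neutral) (simp add: tensor_insert_const_one)
qed

lemma Dstar_tensor: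
  fixes Fs :: "nat \<Rightarrow> 'y::finite \<Rightarrow> complex"
  assumes "A \<subseteq> {1..n}"
  shows "Dstar n (Suc (card A)) (tensor A Fs)
       = (\<lambda>\<theta>. \<Sum>j\<in>{1..n}-A. tensor (insert j A) (Fs(j := (\<lambda>_. 1))) \<theta>)"
proof (rule ext)
  fix \<theta> :: "nat \<rightharpoonup> 'y"
  show "Dstar n (Suc (card A)) (tensor A Fs) \<theta>
      = (\<Sum>j\<in>{1..n}-A. tensor (insert j A) (Fs(j := (\<lambda>_. 1))) \<theta>)"
    using assms unfolding Dstar_def sum_submaps_tensor sum_tensor_insert_const_one[OF assms]
    by (auto simp: Theta_def)
qed

lemma extensions_by_one_point:
  assumes "B \<subseteq> {1..n}" "i \<in> B" "dom \<phi> = B - {i}"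
  shows "{\<theta>\<in>Theta n (card B). \<phi> \<subseteq>\<^sub>m \<theta> \<and> dom \<theta> = B} = range (\<lambda>y. \<phi>(i \<mapsto> y))"
proof (intro equalityI subsetI)
  fix \<theta> assume "\<theta> \<in> {\<theta>\<in>Theta n (card B). \<phi> \<subseteq>\<^sub>m \<theta> \<and> dom \<theta> = B}"
  then have le: "\<phi> \<subseteq>\<^sub>m \<theta>" and d\<theta>: "dom \<theta> = B" by auto
  have "\<theta> = \<phi>(i \<mapsto> the (\<theta> i))"
  proof (rule ext)
    fix l
    show "\<theta> l = (\<phi>(i \<mapsto> the (\<theta> i))) l"
      using le d\<theta> assms(2,3) unfolding map_le_def
      by (cases "l = i"; cases "l \<in> dom \<phi>") auto
  qed
  then show "\<theta> \<in> range (\<lambda>y. \<phi>(i \<mapsto> y))" by blast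
next
  fix \<theta> assume "\<theta> \<in> range (\<lambda>y. \<phi>(i \<mapsto> y))"
  then obtain y where \<theta>: "\<theta> = \<phi>(i \<mapsto> y)" by blast
  have "i \<notin> dom \<phi>" using assms(3) by simp
  then have "\<phi> \<subseteq>\<^sub>m \<theta>" unfolding \<theta> map_le_def by auto
  moreover have "dom \<theta> = B" using \<theta> assms(2,3) by auto
  ultimately show "\<theta> \<in> {\<theta>\<in>Theta n (card B). \<phi> \<subseteq>\<^sub>m \<theta> \<and> dom \<theta> = B}"
    using assms(1) by (simp add: Theta_def)
qed

lemma sum_extensions_tensor:
  fixes Gs :: "nat \<Rightarrow> 'y::finite \<Rightarrow> complex"
  assumes "B \<subseteq> {1..n}" "i \<in> B" "dom \<phi> = B - {i}"
  shows "(\<Sum>\<theta>\<in>{\<theta>\<in>Theta n (card B). \<phi> \<subseteq>\<^sub>m \<theta>}. tensor B Gs \<theta>)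
       = (\<Sum>y\<in>UNIV. Gs i y) * tensor (B - {i}) Gs \<phi>"
proof -
  have finB: "finite B" using assms(1) finite_subset by blast
  have "(\<Sum>\<theta>\<in>{\<theta>\<in>Theta n (card B). \<phi> \<subseteq>\<^sub>m \<theta>}. tensor B Gs \<theta>)
      = (\<Sum>\<theta>\<in>{\<theta>\<in>Theta n (card B). \<phi> \<subseteq>\<^sub>m \<theta> \<and> dom \<theta> = B}. tensor B Gs \<theta>)"
    by (rule sum.mono_neutral_right) (auto simp: finite_Theta tensor_def)
  also have "\<dots> = (\<Sum>y\<in>UNIV. tensor B Gs (\<phi>(i \<mapsto> y)))"
    unfolding extensions_by_one_point[OF assms]
    by (rule sum.reindex_cong[where l="\<lambda>y. \<phi>(i \<mapsto> y)"]) (auto simp: inj_on_def dest: map_upd_eqD1)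
  also have "\<dots> = (\<Sum>y\<in>UNIV. Gs i y * tensor (B - {i}) Gs \<phi>)"
  proof (rule sum.cong[OF refl])
    fix y
    have "dom (\<phi>(i \<mapsto> y)) = B" using assms(2,3) by auto
    then have "tensor B Gs (\<phi>(i \<mapsto> y)) = (\<Prod>l\<in>B. Gs l (the ((\<phi>(i \<mapsto> y)) l)))"
      by (simp add: tensor_def)
    also have "\<dots> = Gs i y * (\<Prod>l\<in>B - {i}. Gs l (the ((\<phi>(i \<mapsto> y)) l)))"
      using assms(2) finB by (simp add: prod.remove)
    also have "\<dots> = Gs i y * (\<Prod>l\<in>B - {i}. Gs l (the (\<phi> l)))"
      by (intro arg_cong[where f="(*) (Gs i y)"] prod.cong) auto
    also have "\<dots> = Gs i y * tensor (B - {i}) Gs \<phi>"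
      using assms(3) by (simp add: tensor_def)
    finally show "tensor B Gs (\<phi>(i \<mapsto> y)) = Gs i y * tensor (B - {i}) Gs \<phi>" .
  qed
  also have "\<dots> = (\<Sum>y\<in>UNIV. Gs i y) * tensor (B - {i}) Gs \<phi>"
    by (simp add: sum_distrib_right)
  finally show ?thesis .
qed

lemma sum_extensions_tensor_eq_0:
  assumes "finite B" "card (dom \<phi>) = card B - 1" "card B \<noteq> 0" "\<forall>i\<in>B. dom \<phi> \<noteq> B - {i}"
  shows "(\<Sum>\<theta>\<in>{\<theta>\<in>Theta n k. \<phi> \<subseteq>\<^sub>m \<theta>}. tensor B Gs \<theta>) = 0"
proof (rule sum.neutral, rule ballI)
  fix \<theta> assume "\<theta> \<in> {\<theta>\<in>Theta n k. \<phi> \<subseteq>\<^sub>m \<theta>}"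
  then have sub\<theta>: "dom \<phi> \<subseteq> dom \<theta>" by (simp add: map_le_implies_dom_le)
  show "tensor B Gs \<theta> = 0"
  proof (cases "dom \<theta> = B")
    case True
    then have sub: "dom \<phi> \<subseteq> B" using sub\<theta> by simp
    moreover have "dom \<phi> \<noteq> B" using assms(2,3) by auto
    ultimately obtain i where i: "i \<in> B" "i \<notin> dom \<phi>" by blast
    then have "dom \<phi> \<subseteq> B - {i}" using sub by blast
    moreover have "card (B - {i}) = card (dom \<phi>)" using i assms(1,2) by simp
    ultimately have "dom \<phi> = B - {i}" using assms(1) by (metis card_subset_eq finite_Diff)
    then show ?thesis using assms(4) i by blast
  qed (simp add: tensor_def)
qed

lemma D_tensor:
  fixes Gs :: "nat \<Rightarrow> 'y::finite \<Rightarrow> complex"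
  assumes "B \<subseteq> {1..n}"
  shows "D n (card B) (tensor B Gs) = (\<lambda>\<phi>. \<Sum>i\<in>B. (\<Sum>y\<in>UNIV. Gs i y) * tensor (B - {i}) Gs \<phi>)"
proof (rule ext)
  fix \<phi> :: "nat \<rightharpoonup> 'y"
  have finB: "finite B" using assms finite_subset by blast
  show "D n (card B) (tensor B Gs) \<phi> = (\<Sum>i\<in>B. (\<Sum>y\<in>UNIV. Gs i y) * tensor (B - {i}) Gs \<phi>)"
  proof (cases "\<exists>i\<in>B. dom \<phi> = B - {i}")
    case True
    then obtain i where i: "i \<in> B" "dom \<phi> = B - {i}" by blast
    then have "\<phi> \<in> Theta n (card B - 1)" "card B \<noteq> 0"
      using assms finB by (auto simp: Theta_def)
    then have "D n (card B) (tensor B Gs) \<phi> = (\<Sum>y\<in>UNIV. Gs i y) * tensor (B - {i}) Gs \<phi>"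
      by (simp add: D_def sum_extensions_tensor[OF assms i])
    moreover have "tensor (B - {i'}) Gs \<phi> = 0" if "i' \<in> B - {i}" for i'
      using that i by (auto simp: tensor_def)
    ultimately show ?thesis
      using i finB by (simp add: sum.remove)
  next
    case False
    then have no_remove: "\<forall>i\<in>B. dom \<phi> \<noteq> B - {i}" by blast
    then have "tensor (B - {i}) Gs \<phi> = 0" if "i \<in> B" for i
      using that by (simp add: tensor_def)
    moreover have "D n (card B) (tensor B Gs) \<phi> = 0"
      using sum_extensions_tensor_eq_0[OF finB _ _ no_remove] by (auto simp: D_def Theta_def)
    ultimately show ?thesis by simp
  qed
qed

lemma tensor_update_const:
  assumes "finite A" "i \<in> A"
  shows "tensor A (Fs(i := (\<lambda>_. a))) = (\<lambda>x. a * tensor A (Fs(i := (\<lambda>_. 1))) x)"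
proof (rule ext)
  fix \<theta> :: "nat \<rightharpoonup> 'a"
  have "(\<Prod>l\<in>A - {i}. (Fs(i := g)) l (the (\<theta> l))) = (\<Prod>l\<in>A - {i}. Fs l (the (\<theta> l)))" for g
    by (rule prod.cong) auto
  then show "tensor A (Fs(i := (\<lambda>_. a))) \<theta> = a * tensor A (Fs(i := (\<lambda>_. 1))) \<theta>"
    using assms by (simp add: tensor_def prod.remove fun_upd_same del: fun_upd_apply)
qed

lemma D_tensor_insert_const_one:
  fixes Fs :: "nat \<Rightarrow> 'y::finite \<Rightarrow> complex"
  assumes "A \<subseteq> {1..n}" "j \<in> {1..n} - A"
  shows "D n (Suc (card A)) (tensor (insert j A) (Fs(j := (\<lambda>_. 1))))
       = (\<lambda>x. of_nat (card (UNIV :: 'y set)) * tensor A Fs x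
            + (\<Sum>i\<in>A. (\<Sum>y\<in>UNIV. Fs i y) * tensor (insert j (A - {i})) (Fs(j := (\<lambda>_. 1))) x))"
proof -
  have finA: "finite A" using assms(1) finite_subset by blast
  have jA: "j \<notin> A" and sub: "insert j A \<subseteq> {1..n}" using assms by auto
  have "tensor A (Fs(j := (\<lambda>_. 1))) = tensor A Fs"
    using jA by (intro tensor_cong) auto
  moreover have "insert j A - {i} = insert j (A - {i})" if "i \<in> A" for i
    using that jA by auto
  moreover have "(\<Sum>i\<in>A. (\<Sum>y\<in>UNIV. (Fs(j := (\<lambda>_. 1))) i y) * tensor (insert j (A - {i})) (Fs(j := (\<lambda>_. 1))) x)
      = (\<Sum>i\<in>A. (\<Sum>y\<in>UNIV. Fs i y) * tensor (insert j (A - {i})) (Fs(j := (\<lambda>_. 1))) x)" for x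
    using jA by (intro sum.cong) auto
  ultimately show ?thesis
    using D_tensor[OF sub, of "Fs(j := (\<lambda>_. 1))"] finA jA by (simp cong: sum.cong)
qed

lemma Dstar_tensor_remove:
  fixes Fs :: "nat \<Rightarrow> 'y::finite \<Rightarrow> complex"
  assumes "A \<subseteq> {1..n}" "i \<in> A"
  shows "Dstar n (card A) (tensor (A - {i}) Fs)
       = (\<lambda>x. tensor A (Fs(i := (\<lambda>_. 1))) x
            + (\<Sum>j\<in>{1..n}-A. tensor (insert j (A - {i})) (Fs(j := (\<lambda>_. 1))) x))"
proof -
  have finA: "finite A" using assms(1) finite_subset by blast
  have "card A = Suc (card (A - {i}))" using assms(2) finA by (metis card_Suc_Diff1)
  moreover have "{1..n} - (A - {i}) = insert i ({1..n} - A)" and sub: "A - {i} \<subseteq> {1..n}"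
    using assms by auto
  ultimately have "Dstar n (card A) (tensor (A - {i}) Fs)
      = (\<lambda>x. \<Sum>j\<in>insert i ({1..n} - A). tensor (insert j (A - {i})) (Fs(j := (\<lambda>_. 1))) x)"
    using Dstar_tensor[OF sub, of Fs] by simp
  also have "\<dots> = (\<lambda>x. tensor A (Fs(i := (\<lambda>_. 1))) x
            + (\<Sum>j\<in>{1..n}-A. tensor (insert j (A - {i})) (Fs(j := (\<lambda>_. 1))) x))"
    using assms(2) by (simp add: insert_absorb)
  finally show ?thesis .
qed

lemma sum_times_tensor_update_one:
  fixes Q :: "'y::finite \<Rightarrow> 'y \<Rightarrow> real" and Fs :: "nat \<Rightarrow> 'y \<Rightarrow> complex"
  assumes ssi: "symmetric_stochastic_irreducible Q" and eig: "eigen_enum Q m lam"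
    and "finite A" "i \<in> A" "idx i \<le> m" "Fs i \<in> W Q lam (idx i)"
  shows "(\<Sum>y\<in>UNIV. Fs i y) * tensor A (Fs(i := (\<lambda>_. 1))) x
       = (if idx i = 0 then of_nat (card (UNIV :: 'y set)) else 0) * tensor A Fs x"
proof (cases "idx i = 0")
  case True
  then have "Qop Q (Fs i) = (\<lambda>y. 1 * Fs i y)"
    using assms(6) eig by (simp add: W_def eigen_enum_def)
  then have "Fs i y = Fs i undefined" for y
    using eigenvalue_1_constant[OF ssi] by blast
  then obtain c where const: "Fs i = (\<lambda>_. c)" by blast
  then have "Fs(i := (\<lambda>_. c)) = Fs" by auto
  then have "tensor A Fs x = c * tensor A (Fs(i := (\<lambda>_. 1))) x"
    using tensor_update_const[OF assms(3,4), of Fs c] by metis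
  then show ?thesis
    using True const by (simp add: mult_ac)
next
  case False
  have "lam 0 = 1" and "inj_on lam {0..m}"
    using eig by (auto simp: eigen_enum_def)
  then have "lam (idx i) \<noteq> 1"
    using assms(5) False by (metis atLeastAtMost_iff inj_on_eq_iff le0)
  moreover have "Qop Q (Fs i) = (\<lambda>y. lam (idx i) * Fs i y)"
    using assms(6) by (simp add: W_def)
  ultimately have "(\<Sum>y\<in>UNIV. Fs i y) = 0"
    using eigenfunction_sum_eq_0[OF ssi] by blast
  then show ?thesis using False by simp
qed

lemma D_Dstar_tensor:
  fixes Q :: "'y::finite \<Rightarrow> 'y \<Rightarrow> real" and Fs :: "nat \<Rightarrow> 'y \<Rightarrow> complex"
  assumes ssi: "symmetric_stochastic_irreducible Q" and eig: "eigen_enum Q m lam"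
    and A: "A \<subseteq> {1..n}" and Fs: "\<forall>j\<in>A. idx j \<le> m \<and> Fs j \<in> W Q lam (idx j)"
  shows "D n (Suc (card A)) (Dstar n (Suc (card A)) (tensor A Fs))
       = (\<lambda>x. Dstar n (card A) (D n (card A) (tensor A Fs)) x
            + of_nat (card (UNIV :: 'y set))
              * (of_nat (n - card A) - of_nat (card {j\<in>A. idx j = 0})) * tensor A Fs x)"
proof (rule ext)
  fix x
  define N where "N = (of_nat (card (UNIV :: 'y set)) :: complex)"
  define s where "s i = (\<Sum>y\<in>UNIV. Fs i y)" for i
  define T where "T i j = tensor (insert j (A - {i})) (Fs(j := (\<lambda>_. 1))) x" for i j
  have finA: "finite A" using A finite_subset by blast
  have "D n (Suc (card A)) (Dstar n (Suc (card A)) (tensor A Fs)) x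
      = (\<Sum>j\<in>{1..n}-A. N * tensor A Fs x + (\<Sum>i\<in>A. s i * T i j))"
    unfolding Dstar_tensor[OF A] D_sum N_def s_def T_def
    by (intro sum.cong refl) (simp add: D_tensor_insert_const_one[OF A])
  also have "\<dots> = of_nat (n - card A) * N * tensor A Fs x + (\<Sum>i\<in>A. \<Sum>j\<in>{1..n}-A. s i * T i j)"
    using A finA by (simp add: sum.distrib card_Diff_subset sum.swap[of _ A])
  finally have lhs: "D n (Suc (card A)) (Dstar n (Suc (card A)) (tensor A Fs)) x
      = of_nat (n - card A) * N * tensor A Fs x + (\<Sum>i\<in>A. \<Sum>j\<in>{1..n}-A. s i * T i j)" .
  have "Dstar n (card A) (D n (card A) (tensor A Fs)) x
      = (\<Sum>i\<in>A. s i * (tensor A (Fs(i := (\<lambda>_. 1))) x + (\<Sum>j\<in>{1..n}-A. T i j)))"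
    unfolding D_tensor[OF A] Dstar_lincomb s_def T_def
    by (intro sum.cong refl) (simp add: Dstar_tensor_remove[OF A])
  also have "\<dots> = (\<Sum>i\<in>A. (if idx i = 0 then N else 0) * tensor A Fs x)
      + (\<Sum>i\<in>A. \<Sum>j\<in>{1..n}-A. s i * T i j)"
  proof -
    have "s i * tensor A (Fs(i := (\<lambda>_. 1))) x = (if idx i = 0 then N else 0) * tensor A Fs x"
      if "i \<in> A" for i
      unfolding s_def N_def using sum_times_tensor_update_one[OF ssi eig finA that] Fs that by blast
    then show ?thesis by (simp add: distrib_left sum.distrib sum_distrib_left)
  qed
  also have "(\<Sum>i\<in>A. (if idx i = 0 then N else 0) * tensor A Fs x)
      = of_nat (card {j\<in>A. idx j = 0}) * N * tensor A Fs x"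
  proof -
    have "{j\<in>A. idx j = 0} = A \<inter> {i. idx i = 0}" by blast
    then show ?thesis using finA by (simp add: sum.If_cases sum_distrib_right[symmetric])
  qed
  finally have rhs: "Dstar n (card A) (D n (card A) (tensor A Fs)) x
      = of_nat (card {j\<in>A. idx j = 0}) * N * tensor A Fs x + (\<Sum>i\<in>A. \<Sum>j\<in>{1..n}-A. s i * T i j)" .
  show "D n (Suc (card A)) (Dstar n (Suc (card A)) (tensor A Fs)) x
      = Dstar n (card A) (D n (card A) (tensor A Fs)) x
        + of_nat (card (UNIV :: 'y set)) * (of_nat (n - card A) - of_nat (card {j\<in>A. idx j = 0}))
          * tensor A Fs x"
    unfolding lhs rhs N_def by (simp add: algebra_simps)
qed

section \<open>Spans of fundamental functions\<close>

lemma cspan_zero: "(\<lambda>_. 0) \<in> cspan B"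
  unfolding cspan_def by (rule CollectI, rule exI[of _ "{}"]) auto

lemma cspan_base: "g \<in> B \<Longrightarrow> g \<in> cspan B"
  unfolding cspan_def by (rule CollectI, rule exI[of _ "{g}"], rule exI[of _ "\<lambda>_. 1"]) auto

lemma cspan_scale: "f \<in> cspan B \<Longrightarrow> (\<lambda>x. a * f x) \<in> cspan B"
  unfolding cspan_def
proof clarify
  fix S and c :: "('a \<Rightarrow> complex) \<Rightarrow> complex" assume "finite S" "S \<subseteq> B"
  then show "\<exists>S' c'. finite S' \<and> S' \<subseteq> B \<and> (\<lambda>x. a * (\<Sum>g\<in>S. c g * g x)) = (\<lambda>x. \<Sum>g\<in>S'. c' g * g x)"
    by (intro exI[of _ S] exI[of _ "\<lambda>g. a * c g"]) (simp add: sum_distrib_left mult.assoc)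
qed

lemma cspan_add: "f1 \<in> cspan B \<Longrightarrow> f2 \<in> cspan B \<Longrightarrow> (\<lambda>x. f1 x + f2 x) \<in> cspan B"
  unfolding cspan_def
proof clarify
  fix S1 S2 and c1 c2 :: "('a \<Rightarrow> complex) \<Rightarrow> complex"
  assume fin: "finite S1" "S1 \<subseteq> B" "finite S2" "S2 \<subseteq> B"
  let ?c = "\<lambda>g. (if g \<in> S1 then c1 g else 0) + (if g \<in> S2 then c2 g else 0)"
  have extend: "(\<Sum>g\<in>S1 \<union> S2. (if g \<in> S then c g else 0) * g x) = (\<Sum>g\<in>S. c g * g x)"
    if "S \<subseteq> S1 \<union> S2" for S c and x :: 'a
  proof -
    have "(\<Sum>g\<in>S1 \<union> S2. (if g \<in> S then c g else 0) * g x)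
        = (\<Sum>g\<in>S1 \<union> S2. if g \<in> S then c g * g x else 0)"
      by (rule sum.cong) auto
    also have "\<dots> = (\<Sum>g\<in>(S1 \<union> S2) \<inter> S. c g * g x)"
      using fin by (simp add: sum.inter_restrict)
    also have "(S1 \<union> S2) \<inter> S = S" using that by auto
    finally show ?thesis .
  qed
  show "\<exists>S c. finite S \<and> S \<subseteq> B \<and>
      (\<lambda>x. (\<Sum>g\<in>S1. c1 g * g x) + (\<Sum>g\<in>S2. c2 g * g x)) = (\<lambda>x. \<Sum>g\<in>S. c g * g x)"
    using fin extend[of S1 c1] extend[of S2 c2]
    by (intro exI[of _ "S1 \<union> S2"] exI[of _ ?c]) (auto simp: distrib_right sum.distrib)
qed

lemma cspan_lincomb:
  "finite S \<Longrightarrow> (\<And>g. g \<in> S \<Longrightarrow> f g \<in> cspan B) \<Longrightarrow> (\<lambda>x. \<Sum>g\<in>S. a g * f g x) \<in> cspan B"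
proof (induction S rule: finite_induct)
  case empty
  then show ?case by (simp add: cspan_zero)
next
  case (insert g S)
  then show ?case by (simp add: cspan_add cspan_scale)
qed

lemma tsize_update_0: "tsize m (c(0 := v)) = tsize m c - c 0 + v"
proof -
  have "{0..m} = insert 0 {1..m}" by auto
  moreover have "(\<Sum>i\<in>{1..m}. (c(0 := v)) i) = (\<Sum>i\<in>{1..m}. c i)" by (rule sum.cong) auto
  ultimately show ?thesis unfolding tsize_def by simp
qed

lemma const_one_in_W0:
  assumes "symmetric_stochastic_irreducible Q" "eigen_enum Q m lam"
  shows "(\<lambda>_. 1) \<in> W Q lam 0"
proof -
  have "(\<Sum>y\<in>UNIV. Q x y) = 1" for x
    using assms(1) unfolding symmetric_stochastic_irreducible_def by blast
  then show ?thesis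
    using assms(2) unfolding W_def Qop_def eigen_enum_def
    by (simp add: of_real_sum[symmetric] del: of_real_sum)
qed

lemma fundamental_insert_const_one:
  assumes "(\<lambda>_. 1) \<in> W Q lam 0" "finite A" "j \<notin> A"
    and Fs: "\<forall>l\<in>A. idx l \<le> m \<and> Fs l \<in> W Q lam (idx l)"
    and count: "\<forall>i\<le>m. int (card {l\<in>A. idx l = i}) = c i" and size: "int (card A) = tsize m c"
  shows "fundamental Q m lam (c(0 := c 0 + 1)) (insert j A) (tensor (insert j A) (Fs(j := (\<lambda>_. 1))))"
  unfolding fundamental_def
proof (intro conjI exI[of _ "Fs(j := (\<lambda>_. 1))"] exI[of _ "idx(j := 0)"])
  show "int (card (insert j A)) = tsize m (c(0 := c 0 + 1))"
    using assms(2,3) size by (simp add: tsize_update_0)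
  show "\<forall>l\<in>insert j A. (idx(j := 0)) l \<le> m \<and> (Fs(j := (\<lambda>_. 1))) l \<in> W Q lam ((idx(j := 0)) l)"
    using assms(1) Fs by auto
  show "\<forall>i\<le>m. int (card {l\<in>insert j A. (idx(j := 0)) l = i}) = (c(0 := c 0 + 1)) i"
  proof (intro allI impI)
    fix i assume "i \<le> m"
    show "int (card {l\<in>insert j A. (idx(j := 0)) l = i}) = (c(0 := c 0 + 1)) i"
    proof (cases "i = 0")
      case True
      then have "{l\<in>insert j A. (idx(j := 0)) l = i} = insert j {l\<in>A. idx l = 0}"
        using assms(3) by auto
      then show ?thesis using count True assms(2,3) by simp
    next
      case False
      then have "{l\<in>insert j A. (idx(j := 0)) l = i} = {l\<in>A. idx l = i}"
        using assms(3) by auto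
      then show ?thesis using count False \<open>i \<le> m\<close> by simp
    qed
  qed
qed simp

lemma Dstar_mem_P:
  fixes Q :: "'y::finite \<Rightarrow> 'y \<Rightarrow> real"
  assumes one: "(\<lambda>_. 1) \<in> W Q lam 0" and F: "F \<in> P n Q m lam t c"
  shows "Dstar n (Suc t) F \<in> P n Q m lam (Suc t) (c(0 := c 0 + 1))"
proof -
  let ?B = "{F. \<exists>A. A \<subseteq> {1..n} \<and> card A = t \<and> fundamental Q m lam c A F}"
  let ?B' = "{F. \<exists>A. A \<subseteq> {1..n} \<and> card A = Suc t \<and> fundamental Q m lam (c(0 := c 0 + 1)) A F}"
  obtain S a where S: "finite S" "S \<subseteq> ?B" and F_eq: "F = (\<lambda>x. \<Sum>g\<in>S. a g * g x)"
    using F unfolding P_def cspan_def by blast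
  have "Dstar n (Suc t) g \<in> cspan ?B'" if g_in: "g \<in> S" for g
  proof -
    obtain A where A: "A \<subseteq> {1..n}" "card A = t" and "fundamental Q m lam c A g"
      using g_in S(2) by blast
    then obtain Fs idx where g: "g = tensor A Fs"
      and Fs: "\<forall>l\<in>A. idx l \<le> m \<and> Fs l \<in> W Q lam (idx l)"
      and count: "\<forall>i\<le>m. int (card {l\<in>A. idx l = i}) = c i" and size: "int (card A) = tsize m c"
      unfolding fundamental_def by blast
    have "finite A" using A(1) finite_subset by blast
    have "tensor (insert j A) (Fs(j := (\<lambda>_. 1))) \<in> ?B'" if "j \<in> {1..n} - A" for j
    proof -
      have "insert j A \<subseteq> {1..n}" "card (insert j A) = Suc t"
        using that A \<open>finite A\<close> by auto
      moreover have "fundamental Q m lam (c(0 := c 0 + 1)) (insert j A) (tensor (insert j A) (Fs(j := (\<lambda>_. 1))))"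
        using fundamental_insert_const_one[OF one \<open>finite A\<close> _ Fs count size] that by blast
      ultimately show ?thesis by blast
    qed
    then have "(\<lambda>x. \<Sum>j\<in>{1..n}-A. 1 * tensor (insert j A) (Fs(j := (\<lambda>_. 1))) x) \<in> cspan ?B'"
      by (intro cspan_lincomb cspan_base) simp
    then show ?thesis
      unfolding g Dstar_tensor[OF A(1), of Fs, unfolded A(2)] by simp
  qed
  then have "(\<lambda>x. \<Sum>g\<in>S. a g * Dstar n (Suc t) g x) \<in> cspan ?B'"
    by (rule cspan_lincomb[OF S(1)])
  then show ?thesis
    unfolding F_eq Dstar_lincomb P_def .
qed

lemma D_Dstar_P:
  fixes Q :: "'y::finite \<Rightarrow> 'y \<Rightarrow> real"
  assumes ssi: "symmetric_stochastic_irreducible Q" and eig: "eigen_enum Q m lam"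
    and F: "F \<in> P n Q m lam t c"
  shows "D n (Suc t) (Dstar n (Suc t) F)
       = (\<lambda>x. Dstar n t (D n t F) x
            + of_nat (card (UNIV :: 'y set)) * (of_nat (n - t) - of_int (c 0)) * F x)"
proof -
  let ?B = "{F. \<exists>A. A \<subseteq> {1..n} \<and> card A = t \<and> fundamental Q m lam c A F}"
  let ?\<gamma> = "of_nat (card (UNIV :: 'y set)) * (of_nat (n - t) - of_int (c 0)) :: complex"
  obtain S a where S: "finite S" "S \<subseteq> ?B" and F_eq: "F = (\<lambda>x. \<Sum>g\<in>S. a g * g x)"
    using F unfolding P_def cspan_def by blast
  have basis: "D n (Suc t) (Dstar n (Suc t) g) = (\<lambda>x. Dstar n t (D n t g) x + ?\<gamma> * g x)"
    if g_in: "g \<in> S" for g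
  proof -
    obtain A where A: "A \<subseteq> {1..n}" "card A = t" and "fundamental Q m lam c A g"
      using g_in S(2) by blast
    then obtain Fs idx where g: "g = tensor A Fs"
      and Fs: "\<forall>l\<in>A. idx l \<le> m \<and> Fs l \<in> W Q lam (idx l)"
      and count: "\<forall>i\<le>m. int (card {l\<in>A. idx l = i}) = c i"
      unfolding fundamental_def by blast
    have c0: "of_nat (card {l\<in>A. idx l = 0}) = (of_int (c 0) :: complex)"
      using count by (metis le0 of_int_of_nat_eq)
    show ?thesis
      using D_Dstar_tensor[OF ssi eig A(1) Fs] unfolding g A(2) c0 .
  qed
  have "D n (Suc t) (Dstar n (Suc t) F) = (\<lambda>x. \<Sum>g\<in>S. a g * (Dstar n t (D n t g) x + ?\<gamma> * g x))"
    unfolding F_eq Dstar_lincomb D_lincomb using basis by (intro ext sum.cong) simp_all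
  also have "\<dots> = (\<lambda>x. Dstar n t (D n t F) x + ?\<gamma> * F x)"
    unfolding F_eq Dstar_lincomb D_lincomb
    by (simp add: distrib_left sum.distrib sum_distrib_left mult.left_commute)
  finally show ?thesis .
qed

section \<open>Orthogonality\<close>

fun Dstar_iter :: "nat \<Rightarrow> nat \<Rightarrow> nat \<Rightarrow> ((nat \<rightharpoonup> 'y) \<Rightarrow> complex) \<Rightarrow> (nat \<rightharpoonup> 'y) \<Rightarrow> complex" where
  "Dstar_iter n k 0 G = G"
| "Dstar_iter n k (Suc d) G = Dstar n (k + Suc d) (Dstar_iter n k d G)"

lemma Prec_eq_Dstar_iter_image:
  "Prec n Q m lam k d c = Dstar_iter n k d ` Prec n Q m lam k 0 (c(0 := c 0 - int d))"
proof (induction d arbitrary: c)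
  case 0
  then show ?case by simp
next
  case (Suc d)
  have "(tprime c)(0 := tprime c 0 - int d) = c(0 := c 0 - int (Suc d))"
    by (simp add: tprime_def algebra_simps)
  then show ?case using Suc[of "tprime c"] by (simp add: image_image)
qed

lemma Dstar_iter_mem_P:
  fixes Q :: "'y::finite \<Rightarrow> 'y \<Rightarrow> real"
  assumes "(\<lambda>_. 1) \<in> W Q lam 0" and "G \<in> P n Q m lam k c"
  shows "Dstar_iter n k j G \<in> P n Q m lam (k + j) (c(0 := c 0 + int j))"
proof (induction j)
  case 0
  then show ?case using assms(2) by simp
next
  case (Suc j)
  have "c(0 := c 0 + int (Suc j)) = (c(0 := c 0 + int j))(0 := (c(0 := c 0 + int j)) 0 + 1)"
    by (rule ext) simp
  then show ?case
    using Dstar_mem_P[OF assms(1) Suc] by (simp only: Dstar_iter.simps add_Suc_right)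
qed

lemma D_Dstar_iter:
  fixes Q :: "'y::finite \<Rightarrow> 'y \<Rightarrow> real"
  assumes ssi: "symmetric_stochastic_irreducible Q" and eig: "eigen_enum Q m lam"
    and G: "G \<in> P n Q m lam k c" and DG: "D n k G = (\<lambda>_. 0)"
  shows "\<exists>\<beta>. D n (k + Suc j) (Dstar_iter n k (Suc j) G) = (\<lambda>x. \<beta> * Dstar_iter n k j G x)"
proof (induction j)
  case 0
  obtain \<gamma> where "D n (Suc k) (Dstar n (Suc k) G) = (\<lambda>x. Dstar n k (D n k G) x + \<gamma> * G x)"
    using D_Dstar_P[OF ssi eig G] by blast
  then have "D n (k + Suc 0) (Dstar_iter n k (Suc 0) G) = (\<lambda>x. \<gamma> * Dstar_iter n k 0 G x)"
    by (simp add: DG Dstar_zero)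
  then show ?case by blast
next
  case (Suc j)
  let ?X = "Dstar_iter n k (Suc j) G"
  obtain \<beta> where \<beta>: "D n (k + Suc j) ?X = (\<lambda>x. \<beta> * Dstar_iter n k j G x)"
    using Suc by blast
  have "?X \<in> P n Q m lam (k + Suc j) (c(0 := c 0 + int (Suc j)))"
    using Dstar_iter_mem_P[OF const_one_in_W0[OF ssi eig] G] .
  then obtain \<gamma> where
    "D n (Suc (k + Suc j)) (Dstar n (Suc (k + Suc j)) ?X) = (\<lambda>x. Dstar n (k + Suc j) (D n (k + Suc j) ?X) x + \<gamma> * ?X x)"
    using D_Dstar_P[OF ssi eig] by blast
  then have "D n (k + Suc (Suc j)) (Dstar_iter n k (Suc (Suc j)) G) = (\<lambda>x. (\<beta> + \<gamma>) * ?X x)"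
    unfolding \<beta> Dstar_scale by (simp add: distrib_right)
  then show ?case by blast
qed

lemma inner_Theta_Dstar:
  fixes F G :: "(nat \<rightharpoonup> 'y::finite) \<Rightarrow> complex"
  assumes "t \<ge> 1"
  shows "inner_Theta n t (Dstar n t F) G = inner_Theta n (t - 1) F (D n t G)"
proof -
  let ?term = "\<lambda>\<phi> \<theta>. if \<phi> \<subseteq>\<^sub>m \<theta> then F \<phi> * cnj (G \<theta>) else 0"
  have Dstar_term: "Dstar n t F \<theta> * cnj (G \<theta>) = (\<Sum>\<phi>\<in>Theta n (t - 1). ?term \<phi> \<theta>)"
    if "\<theta> \<in> Theta n t" for \<theta>
  proof -
    have "Dstar n t F \<theta> = (\<Sum>\<phi>\<in>Theta n (t - 1). if \<phi> \<subseteq>\<^sub>m \<theta> then F \<phi> else 0)"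
      using that unfolding Dstar_def by (simp add: sum.inter_filter[OF finite_Theta])
    then have "Dstar n t F \<theta> * cnj (G \<theta>)
        = (\<Sum>\<phi>\<in>Theta n (t - 1). (if \<phi> \<subseteq>\<^sub>m \<theta> then F \<phi> else 0) * cnj (G \<theta>))"
      by (simp add: sum_distrib_right)
    also have "\<dots> = (\<Sum>\<phi>\<in>Theta n (t - 1). ?term \<phi> \<theta>)"
      by (intro sum.cong) auto
    finally show ?thesis .
  qed
  have D_term: "F \<phi> * cnj (D n t G \<phi>) = (\<Sum>\<theta>\<in>Theta n t. ?term \<phi> \<theta>)"
    if "\<phi> \<in> Theta n (t - 1)" for \<phi>
  proof -
    have "D n t G \<phi> = (\<Sum>\<theta>\<in>Theta n t. if \<phi> \<subseteq>\<^sub>m \<theta> then G \<theta> else 0)"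
      using that assms unfolding D_def by (simp add: sum.inter_filter[OF finite_Theta])
    then have "F \<phi> * cnj (D n t G \<phi>)
        = (\<Sum>\<theta>\<in>Theta n t. F \<phi> * cnj (if \<phi> \<subseteq>\<^sub>m \<theta> then G \<theta> else 0))"
      by (simp add: sum_distrib_left)
    also have "\<dots> = (\<Sum>\<theta>\<in>Theta n t. ?term \<phi> \<theta>)"
      by (intro sum.cong) auto
    finally show ?thesis .
  qed
  have "inner_Theta n t (Dstar n t F) G = (\<Sum>\<theta>\<in>Theta n t. \<Sum>\<phi>\<in>Theta n (t - 1). ?term \<phi> \<theta>)"
    unfolding inner_Theta_def using Dstar_term by (rule sum.cong[OF refl])
  also have "\<dots> = (\<Sum>\<phi>\<in>Theta n (t - 1). \<Sum>\<theta>\<in>Theta n t. ?term \<phi> \<theta>)"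
    by (rule sum.swap)
  also have "\<dots> = inner_Theta n (t - 1) F (D n t G)"
    unfolding inner_Theta_def using D_term by (intro sum.cong refl) simp
  finally show ?thesis .
qed

lemma inner_Theta_scale_right: "inner_Theta n t F (\<lambda>x. \<beta> * G x) = cnj \<beta> * inner_Theta n t F G"
  unfolding inner_Theta_def by (simp add: sum_distrib_left mult_ac)

lemma inner_Theta_commute: "inner_Theta n t G F = cnj (inner_Theta n t F G)"
  unfolding inner_Theta_def by (simp add: mult.commute)

lemma inner_Dstar_iter_eq_0:
  fixes Q :: "'y::finite \<Rightarrow> 'y \<Rightarrow> real"
  assumes ssi: "symmetric_stochastic_irreducible Q" and eig: "eigen_enum Q m lam"
    and G: "G \<in> P n Q m lam k c" and DG: "D n k G = (\<lambda>_. 0)" and "k' < k"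
  shows "inner_Theta n (k + j) (Dstar_iter n k' (k - k' + j) F) (Dstar_iter n k j G) = 0"
proof (induction j)
  case 0
  obtain e where e: "k - k' = Suc e" and "k' + Suc e = k"
    using \<open>k' < k\<close> by (metis Suc_diff_Suc add_diff_inverse_nat less_imp_le_nat not_less)
  then have "inner_Theta n (k + 0) (Dstar_iter n k' (k - k' + 0) F) (Dstar_iter n k 0 G)
      = inner_Theta n k (Dstar n k (Dstar_iter n k' e F)) G"
    by simp
  also have "\<dots> = inner_Theta n (k - 1) (Dstar_iter n k' e F) (D n k G)"
    using \<open>k' < k\<close> by (intro inner_Theta_Dstar) simp
  also have "\<dots> = 0"
    unfolding DG inner_Theta_def by simp
  finally show ?case .
next
  case (Suc j)
  obtain \<beta> where \<beta>: "D n (k + Suc j) (Dstar_iter n k (Suc j) G) = (\<lambda>x. \<beta> * Dstar_iter n k j G x)"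
    using D_Dstar_iter[OF ssi eig G DG] by blast
  have "Dstar_iter n k' (k - k' + Suc j) F = Dstar n (k + Suc j) (Dstar_iter n k' (k - k' + j) F)"
    using \<open>k' < k\<close> by simp
  then have "inner_Theta n (k + Suc j) (Dstar_iter n k' (k - k' + Suc j) F) (Dstar_iter n k (Suc j) G)
      = inner_Theta n (k + j) (Dstar_iter n k' (k - k' + j) F) (D n (k + Suc j) (Dstar_iter n k (Suc j) G))"
    by (simp add: inner_Theta_Dstar)
  also have "\<dots> = 0"
    unfolding \<beta> inner_Theta_scale_right Suc.IH by simp
  finally show ?case .
qed

lemma inner_Theta_Phck_eq_0:
  fixes Q :: "'y::finite \<Rightarrow> 'y \<Rightarrow> real"
  assumes ssi: "symmetric_stochastic_irreducible Q" and eig: "eigen_enum Q m lam"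
    and "k1 < k2" "k2 \<le> h"
    and F: "F \<in> Phck n Q m lam h b k1" and G: "G \<in> Phck n Q m lam h b k2"
  shows "inner_Theta n h F G = 0"
proof -
  obtain F0 where F0: "F = Dstar_iter n k1 (h - k1) F0"
    using F unfolding Phck_def Prec_eq_Dstar_iter_image[of n Q m lam k1 "h - k1"] by (elim imageE)
  obtain G0 where G0_mem: "G0 \<in> Prec n Q m lam k2 0 (b(0 := b 0 - int (h - k2)))"
    and G0: "G = Dstar_iter n k2 (h - k2) G0"
    using G unfolding Phck_def Prec_eq_Dstar_iter_image[of n Q m lam k2 "h - k2"] by (elim imageE)
  have "G0 \<in> P n Q m lam k2 (b(0 := b 0 - int (h - k2)))" and "D n k2 G0 = (\<lambda>_. 0)"
    using G0_mem by simp_all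
  from inner_Dstar_iter_eq_0[OF ssi eig this \<open>k1 < k2\<close>, of "h - k2" F0]
  have "inner_Theta n (k2 + (h - k2)) (Dstar_iter n k1 (k2 - k1 + (h - k2)) F0) G = 0"
    unfolding G0 .
  moreover have "k2 + (h - k2) = h" and "k2 - k1 + (h - k2) = h - k1"
    using \<open>k1 < k2\<close> \<open>k2 \<le> h\<close> by auto
  ultimately show ?thesis
    unfolding F0 by simp
qed

theorem lemma7p10:
  fixes n h m :: nat and Q :: "'y::finite \<Rightarrow> 'y \<Rightarrow> real" and lam :: "nat \<Rightarrow> complex"
    and b :: "nat \<Rightarrow> int"
  assumes "symmetric_stochastic_irreducible Q"
    and "eigen_enum Q m lam"
    and "h \<le> n"
    and "\<forall>i\<le>m. b i \<ge> 0"
    and "tsize m b = int h"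
  shows "\<forall>k1 k2 F G. int k1 \<ge> tlen m b \<and> k1 \<le> h \<and> real k1 \<le> (real n + of_int (tlen m b)) / 2
          \<and> int k2 \<ge> tlen m b \<and> k2 \<le> h \<and> real k2 \<le> (real n + of_int (tlen m b)) / 2
          \<and> k1 \<noteq> k2 \<and> F \<in> Phck n Q m lam h b k1 \<and> G \<in> Phck n Q m lam h b k2
          \<longrightarrow> inner_Theta n h F G = 0"
proof (intro allI impI, elim conjE)
  fix k1 k2 F G
  assume "k1 \<le> h" "k2 \<le> h" "k1 \<noteq> k2"
    and F: "F \<in> Phck n Q m lam h b k1" and G: "G \<in> Phck n Q m lam h b k2"
  show "inner_Theta n h F G = 0"
  proof (cases "k1 < k2")
    case True
    show ?thesis
      using inner_Theta_Phck_eq_0[OF assms(1,2) True \<open>k2 \<le> h\<close> F G] .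
  next
    case False
    then have "k2 < k1" using \<open>k1 \<noteq> k2\<close> by simp
    then have "inner_Theta n h G F = 0"
      using inner_Theta_Phck_eq_0[OF assms(1,2) _ \<open>k1 \<le> h\<close> G F] by blast
    then show ?thesis
      using inner_Theta_commute[of n h G F] by simp
  qed
qed

end
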